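(* Let $n\ge 2$ and let $D,D'\subseteq\Phi^+$ be rook placements. If $\Omega_D\subseteq\overline{\Omega_{D'}}$ (Zariski closure), then $\sigma_D\le_B\sigma_{D'}$, where $\le_B$ is the Bruhat–Chevalley order on the symmetric group $S_{2n-2}$.
   Context: Let $B\subseteq \mathrm{GL}_n(\mathbb{C})$ be the group of invertible upper-triangular matrices. Let $\mathfrak{n}$ be the Lie algebra of strictly upper-triangular $n\times n$ matrices; identify $\mathfrak{n}^*$ with the strictly lower-triangular matrices via $\langle\lambda,x\rangle=\mathrm{tr}(\lambda x)$, so that $b.\lambda=(b\lambda b^{-1})_{\mathrm{low}}$ ($X_{\mathrm{low}}$ = strictly lower-triangular part). Let $e_{i,j}$ be the elementary matrix units. Let $\Phi^+=\{(i,j)\in\mathbb{Z}^2:1\le j<i\le n\}$, with rows $\mathcal{R}_k=\{(k,s)\in\Phi^+\}$ and columns $\mathcal{C}_k=\{(r,k)\in\Phi^+\}$. A rook placement is a subset $D\subseteq\Phi^+$ with $|D\cap\mathcal{R}_k|\le 1$ and $|D\cap\mathcal{C}_k|\le1$ for all $k$. Put $f_D=\sum_{(i,j)\in D}e_{i,j}$ and $\Omega_D=B.f_D$. For a rook placement $D=\{(i_1,j_1),\dots,(i_s,j_s)\}$, the involution $\sigma_D\in S_{2n-2}$ is the product of the (pairwise disjoint) transpositions $(2i_r-2,\,2j_r-1)$, $1\le r\le s$. *)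

theory Defs
  imports Complex_Main
begin

text \<open>Matrices are functions nat => nat => complex; only indices in {1..n} matter.\<close>

type_synonym cmat = "nat \<Rightarrow> nat \<Rightarrow> complex"

definition mmul :: "nat \<Rightarrow> cmat \<Rightarrow> cmat \<Rightarrow> cmat" where
  "mmul n A C = (\<lambda>i j. \<Sum>k=1..n. A i k * C k j)"

definition is_inverse :: "nat \<Rightarrow> cmat \<Rightarrow> cmat \<Rightarrow> bool" where
  "is_inverse n b c \<longleftrightarrow>
     (\<forall>i\<in>{1..n}. \<forall>j\<in>{1..n}.
        mmul n b c i j = (if i = j then 1 else 0) \<and> mmul n c b i j = (if i = j then 1 else 0))"

definition borel :: "nat \<Rightarrow> cmat set" where
  "borel n = {b. (\<forall>i j. 1 \<le> j \<and> j < i \<and> i \<le> n \<longrightarrow> b i j = 0) \<and> (\<exists>c. is_inverse n b c)}"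

definition minv :: "nat \<Rightarrow> cmat \<Rightarrow> cmat" where
  "minv n b = (SOME c. is_inverse n b c)"

definition low :: "nat \<Rightarrow> cmat \<Rightarrow> cmat" where
  "low n X = (\<lambda>i j. if 1 \<le> j \<and> j < i \<and> i \<le> n then X i j else 0)"

definition bact :: "nat \<Rightarrow> cmat \<Rightarrow> cmat \<Rightarrow> cmat" where
  "bact n b L = low n (mmul n (mmul n b L) (minv n b))"

definition posroots :: "nat \<Rightarrow> (nat \<times> nat) set" where
  "posroots n = {(i, j). 1 \<le> j \<and> j < i \<and> i \<le> n}"

definition rook_placement :: "nat \<Rightarrow> (nat \<times> nat) set \<Rightarrow> bool" where
  "rook_placement n D \<longleftrightarrow> D \<subseteq> posroots n \<and>
     (\<forall>k. card {s. (k, s) \<in> D} \<le> 1) \<and> (\<forall>k. card {r. (r, k) \<in> D} \<le> 1)"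

definition fD :: "nat \<Rightarrow> (nat \<times> nat) set \<Rightarrow> cmat" where
  "fD n D = (\<lambda>i j. if (i, j) \<in> D then 1 else 0)"

definition orbit :: "nat \<Rightarrow> (nat \<times> nat) set \<Rightarrow> cmat set" where
  "orbit n D = (\<lambda>b. bact n b (fD n D)) ` borel n"

inductive_set polyfun :: "(cmat \<Rightarrow> complex) set" where
  const: "(\<lambda>x. c) \<in> polyfun"
| coord: "(\<lambda>x. x i j) \<in> polyfun"
| add: "p \<in> polyfun \<Longrightarrow> q \<in> polyfun \<Longrightarrow> (\<lambda>x. p x + q x) \<in> polyfun"
| mult: "p \<in> polyfun \<Longrightarrow> q \<in> polyfun \<Longrightarrow> (\<lambda>x. p x * q x) \<in> polyfun"

definition zariski_closure :: "cmat set \<Rightarrow> cmat set" where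
  "zariski_closure S = {x. \<forall>p\<in>polyfun. (\<forall>s\<in>S. p s = 0) \<longrightarrow> p x = 0}"

text \<open>The involution sigma_D: product of transpositions (2i-2, 2j-1) for (i,j) in D.\<close>
definition sigmaD :: "(nat \<times> nat) set \<Rightarrow> nat \<Rightarrow> nat" where
  "sigmaD D x =
     (if \<exists>(i, j)\<in>D. x = 2*i - 2 then (THE y. \<exists>(i, j)\<in>D. x = 2*i - 2 \<and> y = 2*j - 1)
      else if \<exists>(i, j)\<in>D. x = 2*j - 1 then (THE y. \<exists>(i, j)\<in>D. x = 2*j - 1 \<and> y = 2*i - 2)
      else x)"

text \<open>Bruhat order on permutations of {1..m} (as functions nat => nat fixing everything else).\<close>
definition transp :: "nat \<Rightarrow> nat \<Rightarrow> nat \<Rightarrow> nat" where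
  "transp a b x = (if x = a then b else if x = b then a else x)"

definition inv_count :: "nat \<Rightarrow> (nat \<Rightarrow> nat) \<Rightarrow> nat" where
  "inv_count m w = card {(a, b). 1 \<le> a \<and> a < b \<and> b \<le> m \<and> w a > w b}"

definition bruhat_step :: "nat \<Rightarrow> (nat \<Rightarrow> nat) \<Rightarrow> (nat \<Rightarrow> nat) \<Rightarrow> bool" where
  "bruhat_step m u w \<longleftrightarrow>
     (\<exists>a b. 1 \<le> a \<and> a < b \<and> b \<le> m \<and> w = u \<circ> transp a b \<and> inv_count m u < inv_count m w)"

definition bruhat_le :: "nat \<Rightarrow> (nat \<Rightarrow> nat) \<Rightarrow> (nat \<Rightarrow> nat) \<Rightarrow> bool" where
  "bruhat_le m = (bruhat_step m)\<^sup>*\<^sup>*"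

end

theory Submission
  imports Defs "HOL-Combinatorics.Permutations" "Jordan_Normal_Form.Determinant"
begin

text \<open>The rank numbers \<open>#{k \<le> p. q \<le> \<sigma>\<^sub>D k}\<close> of the involution \<open>\<sigma>\<^sub>D\<close> exceed those of the
  identity by the number of rooks \<open>(i, j)\<close> whose transposition \<open>(2j - 1, 2i - 2)\<close> straddles
  \<open>(p, q)\<close>, i.e. by the number of rooks of \<open>D\<close> in a south-west corner block
  (rows \<open>\<ge> r\<close>, columns \<open>\<le> c\<close>, \<open>c < r\<close>). Since the Bruhat order is the dominance order of
  rank numbers, it suffices to compare these corner counts for \<open>D\<close> and \<open>D'\<close>.
  On \<open>\<Omega>\<^sub>D\<^sub>'\<close> the corner block of \<open>b.f\<^sub>D\<^sub>'\<close> factors through the rooks of \<open>D'\<close> in that corner,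
  because \<open>b\<close> and \<open>b\<^sup>-\<^sup>1\<close> are upper triangular; so all larger minors vanish on \<open>\<Omega>\<^sub>D\<^sub>'\<close> and, being
  polynomials, on its closure. At \<open>f\<^sub>D\<close> the minor on the rows and columns of the rooks of \<open>D\<close>
  in the corner is \<open>1\<close>.\<close>

lemma transp_eq_transpose: "Defs.transp a b = transpose a b"
  by (simp add: fun_eq_iff Defs.transp_def transpose_def)

fun rank_count :: "(nat \<Rightarrow> nat) \<Rightarrow> nat \<Rightarrow> nat \<Rightarrow> nat" where
  "rank_count u 0 q = 0"
| "rank_count u (Suc p) q = rank_count u p q + (if q \<le> u (Suc p) then 1 else 0)"

fun count_between :: "(nat \<Rightarrow> nat) \<Rightarrow> nat \<Rightarrow> nat \<Rightarrow> nat \<Rightarrow> nat" where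
  "count_between u 0 lo hi = 0"
| "count_between u (Suc p) lo hi =
     count_between u p lo hi + (if lo \<le> u (Suc p) \<and> u (Suc p) \<le> hi then 1 else 0)"

lemma rank_count_cong: "(\<And>k. 1 \<le> k \<Longrightarrow> k \<le> p \<Longrightarrow> u k = w k) \<Longrightarrow> rank_count u p q = rank_count w p q"
  by (induction p) auto

lemma count_between_cong:
  "(\<And>k. 1 \<le> k \<Longrightarrow> k \<le> p \<Longrightarrow> u k = w k) \<Longrightarrow> count_between u p lo hi = count_between w p lo hi"
  by (induction p) auto

lemma rank_count_split: "q \<le> Suc h \<Longrightarrow> rank_count u p q = rank_count u p (Suc h) + count_between u p q h"
  by (induction p) auto

lemma count_between_mono: "p \<le> p' \<Longrightarrow> count_between u p lo hi \<le> count_between u p' lo hi"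
  by (induction p') (auto simp: le_Suc_eq)

lemma count_between_stable:
  "p0 \<le> p \<Longrightarrow> (\<And>k. p0 < k \<Longrightarrow> k \<le> p \<Longrightarrow> \<not> (lo \<le> u k \<and> u k \<le> hi))
    \<Longrightarrow> count_between u p lo hi = count_between u p0 lo hi"
  by (induction p) (auto simp: le_Suc_eq)

lemma rank_count_comp_transpose:
  assumes "1 \<le> a" "a < b" "u a < u b"
  shows "rank_count (u \<circ> transpose a b) p q =
           rank_count u p q + (if a \<le> p \<and> p < b \<and> u a < q \<and> q \<le> u b then 1 else 0)"
  using assms by (induction p) (auto simp: transpose_def)

lemma inv_count_comp_transpose:
  assumes "1 \<le> a" "a < b" "b \<le> m" "u a < u b"
  shows "inv_count m u < inv_count m (u \<circ> transpose a b)"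
proof -
  define v where "v = u \<circ> transpose a b"
  define I where "I = (\<lambda>w::nat\<Rightarrow>nat. {(x, y). 1 \<le> x \<and> x < y \<and> y \<le> m \<and> w x > w y})"
  \<comment> \<open>Relabelling by the transposition injects the inversions of \<open>u\<close> into those of \<open>v\<close>
      other than \<open>(a, b)\<close>.\<close>
  define g where "g = (\<lambda>(x, y). if x < a \<or> b < y then (transpose a b x, transpose a b y) else (x, y))"
  have fin: "finite (I w)" for w
    by (rule finite_subset[of _ "{1..m} \<times> {1..m}"]) (auto simp: I_def)
  have new: "(a, b) \<in> I v" using assms by (auto simp: I_def v_def)
  have sub: "g ` I u \<subseteq> I v - {(a, b)}"
    using assms by (auto simp: I_def v_def g_def transpose_def split: if_splits)
  have inj: "inj_on g (I u)"
    unfolding inj_on_def I_def g_def using assms by (auto simp: transpose_def split: if_splits)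
  have "card (I u) = card (g ` I u)" using card_image[OF inj] by simp
  also have "\<dots> \<le> card (I v - {(a, b)})" by (rule card_mono) (use fin sub in auto)
  also have "\<dots> < card (I v)" by (rule card_Diff1_less[OF fin new])
  finally show ?thesis unfolding inv_count_def I_def v_def by simp
qed

lemma first_difference_less:
  assumes dom: "\<And>p q. rank_count u p q \<le> rank_count w p q"
    and agree: "\<And>k. k < a \<Longrightarrow> u k = w k" and "1 \<le> a" "u a \<noteq> w a"
  shows "u a < w a"
proof (rule ccontr)
  assume "\<not> u a < w a"
  then have "w a < u a" using \<open>u a \<noteq> w a\<close> by simp
  obtain a0 where a0: "a = Suc a0" using \<open>1 \<le> a\<close> by (cases a) auto
  have "rank_count u a0 (u a) = rank_count w a0 (u a)"
    by (rule rank_count_cong) (use agree a0 in auto)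
  then have "rank_count w a (u a) < rank_count u a (u a)"
    using \<open>w a < u a\<close> a0 by simp
  then show False using dom leD by blast
qed

lemma rank_count_less_in_gap:
  assumes dom: "\<And>p q. rank_count u p q \<le> rank_count w p q"
    and agree: "\<And>k. k < a \<Longrightarrow> u k = w k" and "1 \<le> a"
    and "a < b" "u a < u b" "u b \<le> w a"
    and gap: "\<And>k. a < k \<Longrightarrow> k < b \<Longrightarrow> \<not> (u a < u k \<and> u k \<le> w a)"
    and "a \<le> p" "p < b" "u a < q" "q \<le> u b"
  shows "rank_count u p q < rank_count w p q"
proof -
  obtain a0 where a0: "a = Suc a0" using \<open>1 \<le> a\<close> by (cases a) auto
  have q: "q \<le> Suc (w a)" using assms by simp
  \<comment> \<open>Up to \<open>p\<close>, \<open>w\<close> takes a value in \<open>[q, w a]\<close> at \<open>a\<close>, while \<open>u\<close> takes none on \<open>[a, p]\<close>.\<close>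
  have "count_between u p q (w a) = count_between u a0 q (w a)"
  proof (rule count_between_stable)
    fix k assume "a0 < k" "k \<le> p"
    then have "k = a \<or> (a < k \<and> k < b)" using a0 assms by auto
    then show "\<not> (q \<le> u k \<and> u k \<le> w a)" using gap assms by fastforce
  qed (use a0 assms in simp)
  also have "\<dots> = count_between w a0 q (w a)"
    by (rule count_between_cong) (use agree a0 in auto)
  also have "\<dots> < count_between w a q (w a)" using a0 assms by simp
  also have "\<dots> \<le> count_between w p q (w a)" by (rule count_between_mono) fact
  finally have "count_between u p q (w a) < count_between w p q (w a)" .
  then show ?thesis
    using rank_count_split[OF q, of u p] rank_count_split[OF q, of w p] dom[of p "Suc (w a)"]
    by linarith
qed

lemma rank_count_step_below:
  assumes u: "u permutes {1..m}" and w: "w permutes {1..m}"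
    and dom: "\<And>p q. rank_count u p q \<le> rank_count w p q" and "u \<noteq> w"
  obtains a b where "1 \<le> a" "a < b" "b \<le> m" "u a < u b"
    "\<And>p q. rank_count (u \<circ> transpose a b) p q \<le> rank_count w p q"
proof -
  define a where "a = (LEAST x. u x \<noteq> w x)"
  have ua: "u a \<noteq> w a" unfolding a_def by (rule LeastI_ex) (use \<open>u \<noteq> w\<close> in auto)
  have agree: "\<And>k. k < a \<Longrightarrow> u k = w k" unfolding a_def using not_less_Least by blast
  have a: "1 \<le> a" "a \<le> m" using ua u w by (metis atLeastAtMost_iff permutes_not_in)+
  have ualt: "u a < w a" by (rule first_difference_less[OF dom agree a(1) ua])
  obtain b' where b': "u b' = w a" using permutes_surj[OF u] by (metis surjD)
  have "w a \<in> {1..m}" using permutes_in_image[OF w] a by simp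
  then have b'm: "b' \<in> {1..m}" using b' u by (metis permutes_not_in)
  have "a < b'"
  proof (rule ccontr)
    assume "\<not> a < b'"
    then have "b' < a" using b' ua by (cases "b' = a") auto
    then have "w b' = w a" using agree b' by simp
    then show False using \<open>b' < a\<close> permutes_inj[OF w] by (auto dest: injD)
  qed
  define P where "P = (\<lambda>k. a < k \<and> u a < u k \<and> u k \<le> w a)"
  have "P b'" using \<open>a < b'\<close> b' ualt unfolding P_def by simp
  define b where "b = (LEAST k. P k)"
  have "P b" unfolding b_def by (rule LeastI) fact
  have "b \<le> b'" unfolding b_def by (rule Least_le) fact
  have gap: "\<not> (u a < u k \<and> u k \<le> w a)" if "a < k" "k < b" for k
    using not_less_Least[of k P] that unfolding b_def P_def by auto
  have ab: "a < b" "b \<le> m" "u a < u b" "u b \<le> w a"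
    using \<open>P b\<close> \<open>b \<le> b'\<close> b'm unfolding P_def by auto
  show thesis
  proof (rule that[OF a(1) ab(1,2,3)])
    fix p q
    show "rank_count (u \<circ> transpose a b) p q \<le> rank_count w p q"
      using rank_count_comp_transpose[OF a(1) ab(1,3), of p q] dom[of p q]
        rank_count_less_in_gap[OF dom agree a(1) ab(1,3,4) gap, of p q]
      by (auto split: if_splits)
  qed
qed

lemma bruhat_le_of_rank_count_le:
  assumes "u permutes {1..m}" "w permutes {1..m}" "\<And>p q. rank_count u p q \<le> rank_count w p q"
  shows "bruhat_le m u w"
  using assms
proof (induction "\<Sum>(p, q)\<in>{..m} \<times> {..Suc m}. rank_count w p q - rank_count u p q"
    arbitrary: u rule: less_induct)
  case less
  show ?case
  proof (cases "u = w")
    case True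
    then show ?thesis unfolding bruhat_le_def by simp
  next
    case False
    obtain a b where ab: "1 \<le> a" "a < b" "b \<le> m" "u a < u b"
      and vw: "\<And>p q. rank_count (u \<circ> transpose a b) p q \<le> rank_count w p q"
      using rank_count_step_below[OF less.prems False] by blast
    define v where "v = u \<circ> transpose a b"
    have rv: "rank_count v p q = rank_count u p q
               + (if a \<le> p \<and> p < b \<and> u a < q \<and> q \<le> u b then 1 else 0)" for p q
      unfolding v_def by (rule rank_count_comp_transpose[OF ab(1,2,4)])
    have "u b \<le> m" using permutes_in_image[OF less.prems(1), of b] ab by simp
    then have "(\<Sum>(p, q)\<in>{..m} \<times> {..Suc m}. rank_count w p q - rank_count v p q)
             < (\<Sum>(p, q)\<in>{..m} \<times> {..Suc m}. rank_count w p q - rank_count u p q)"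
      using vw[of a "u b", folded v_def] rv[of a "u b"] ab
      by (intro sum_strict_mono_ex1 ballI bexI[of _ "(a, u b)"])
        (auto simp: rv intro: diff_le_mono2)
    moreover have "v permutes {1..m}"
      unfolding v_def using less.prems(1) ab by (intro permutes_compose permutes_swap_id) auto
    ultimately have "bruhat_le m v w" using less.hyps less.prems(2) vw unfolding v_def by blast
    moreover have "bruhat_step m u v"
      unfolding bruhat_step_def transp_eq_transpose v_def
      using ab inv_count_comp_transpose[of a b m u] by auto
    ultimately show ?thesis unfolding bruhat_le_def by (meson converse_rtranclp_into_rtranclp)
  qed
qed

lemma finite_posroots: "finite (posroots n)"
  by (rule finite_subset[of _ "{1..n} \<times> {1..n}"]) (auto simp: posroots_def)

lemma rook_placement_finite: "rook_placement n D \<Longrightarrow> finite D"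
  unfolding rook_placement_def using finite_posroots finite_subset by blast

lemma rook_placement_pos: "rook_placement n D \<Longrightarrow> (i, j) \<in> D \<Longrightarrow> 1 \<le> j \<and> j < i \<and> i \<le> n"
  unfolding rook_placement_def posroots_def by auto

lemma finite_row_section: "finite D \<Longrightarrow> finite {s. (k, s) \<in> D}"
  by (rule finite_subset[of _ "snd ` D"]) force+

lemma finite_col_section: "finite D \<Longrightarrow> finite {r. (r, k) \<in> D}"
  by (rule finite_subset[of _ "fst ` D"]) force+

lemma rook_placement_row_unique:
  assumes "rook_placement n D" "(k, s1) \<in> D" "(k, s2) \<in> D"
  shows "s1 = s2"
proof -
  have "finite {s. (k, s) \<in> D}"
    using rook_placement_finite[OF assms(1)] by (rule finite_row_section)
  moreover have "card {s. (k, s) \<in> D} \<le> Suc 0" using assms(1) unfolding rook_placement_def by simp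
  ultimately show ?thesis using card_le_Suc0_iff_eq assms(2,3) by blast
qed

lemma rook_placement_col_unique:
  assumes "rook_placement n D" "(r1, k) \<in> D" "(r2, k) \<in> D"
  shows "r1 = r2"
proof -
  have "finite {r. (r, k) \<in> D}"
    using rook_placement_finite[OF assms(1)] by (rule finite_col_section)
  moreover have "card {r. (r, k) \<in> D} \<le> Suc 0" using assms(1) unfolding rook_placement_def by simp
  ultimately show ?thesis using card_le_Suc0_iff_eq assms(2,3) by blast
qed

lemma rook_placement_subset:
  assumes "rook_placement n D" "E \<subseteq> D"
  shows "rook_placement n E"
proof -
  have "finite D" by (rule rook_placement_finite[OF assms(1)])
  then have "card {s. (k, s) \<in> E} \<le> card {s. (k, s) \<in> D}"
    and "card {r. (r, k) \<in> E} \<le> card {r. (r, k) \<in> D}" for k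
    using assms(2) by (intro card_mono finite_row_section finite_col_section; blast)+
  then show ?thesis using assms unfolding rook_placement_def by (meson order_trans subset_trans)
qed

lemma sigmaD_row:
  assumes D: "rook_placement n D" and ij: "(i, j) \<in> D"
  shows "sigmaD D (2*i - 2) = 2*j - 1"
proof -
  have "(THE y. \<exists>(i', j')\<in>D. 2*i - 2 = 2*i' - 2 \<and> y = 2*j' - 1) = 2*j - 1"
  proof (rule the_equality)
    fix y assume "\<exists>(i', j')\<in>D. 2*i - 2 = 2*i' - 2 \<and> y = 2*j' - 1"
    then obtain i' j' where h: "(i', j') \<in> D" "2*i - 2 = 2*i' - 2" "y = 2*j' - 1" by auto
    have "i' = i" using h rook_placement_pos[OF D h(1)] rook_placement_pos[OF D ij] by arith
    then show "y = 2*j - 1" using rook_placement_row_unique[OF D] h(1,3) ij by blast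
  qed (use ij in auto)
  then show ?thesis using ij unfolding sigmaD_def by auto
qed

lemma sigmaD_col:
  assumes D: "rook_placement n D" and ij: "(i, j) \<in> D"
  shows "sigmaD D (2*j - 1) = 2*i - 2"
proof -
  have "\<not> (\<exists>(i', j')\<in>D. 2*j - 1 = 2*i' - 2)"
  proof
    assume "\<exists>(i', j')\<in>D. 2*j - 1 = 2*i' - 2"
    then obtain i' j' where "(i', j') \<in> D" "2*j - 1 = 2*i' - 2" by auto
    then show False using rook_placement_pos[OF D \<open>(i', j') \<in> D\<close>] rook_placement_pos[OF D ij]
      by presburger
  qed
  moreover have "(THE y. \<exists>(i', j')\<in>D. 2*j - 1 = 2*j' - 1 \<and> y = 2*i' - 2) = 2*i - 2"
  proof (rule the_equality)
    fix y assume "\<exists>(i', j')\<in>D. 2*j - 1 = 2*j' - 1 \<and> y = 2*i' - 2"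
    then obtain i' j' where h: "(i', j') \<in> D" "2*j - 1 = 2*j' - 1" "y = 2*i' - 2" by auto
    have "j' = j" using h rook_placement_pos[OF D h(1)] rook_placement_pos[OF D ij] by simp
    then show "y = 2*i - 2" using rook_placement_col_unique[OF D] h(1,3) ij by blast
  qed (use ij in auto)
  ultimately show ?thesis using ij unfolding sigmaD_def by auto
qed

lemma sigmaD_fixed: "\<forall>(i, j)\<in>D. x \<noteq> 2*i - 2 \<and> x \<noteq> 2*j - 1 \<Longrightarrow> sigmaD D x = x"
  unfolding sigmaD_def by auto

lemma sigmaD_cases:
  obtains (row) i j where "(i, j) \<in> D" "x = 2*i - 2"
  | (col) i j where "(i, j) \<in> D" "x = 2*j - 1"
  | (free) "\<forall>(i, j)\<in>D. x \<noteq> 2*i - 2 \<and> x \<noteq> 2*j - 1"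
proof (cases "\<exists>(i, j)\<in>D. x = 2*i - 2 \<or> x = 2*j - 1")
  case False
  then show ?thesis using free by blast
qed (use row col in blast)

lemma sigmaD_involution:
  assumes D: "rook_placement n D"
  shows "sigmaD D (sigmaD D x) = x"
proof (cases rule: sigmaD_cases[of D x])
  case (row i j)
  then show ?thesis using sigmaD_row[OF D row(1)] sigmaD_col[OF D row(1)] by simp
next
  case (col i j)
  then show ?thesis using sigmaD_row[OF D col(1)] sigmaD_col[OF D col(1)] by simp
qed (simp add: sigmaD_fixed)

lemma sigmaD_permutes:
  assumes D: "rook_placement n D"
  shows "sigmaD D permutes {1..2*n - 2}"
  unfolding permutes_def
proof (intro conjI allI impI)
  fix x assume x: "x \<notin> {1..2*n - 2}"
  show "sigmaD D x = x"
  proof (rule sigmaD_fixed, clarify)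
    fix a b assume "(a, b) \<in> D"
    then show "x \<noteq> 2*a - 2 \<and> x \<noteq> 2*b - 1" using rook_placement_pos[OF D] x by fastforce
  qed
next
  fix y show "\<exists>!x. sigmaD D x = y"
    using sigmaD_involution[OF D] by metis
qed

lemma sigmaD_free_new_rook:
  assumes D: "rook_placement n (insert (i, j) D)" and new: "(i, j) \<notin> D"
  shows "\<forall>(a, b)\<in>D. 2*j - 1 \<noteq> 2*a - 2 \<and> 2*j - 1 \<noteq> 2*b - 1"
    and "\<forall>(a, b)\<in>D. 2*i - 2 \<noteq> 2*a - 2 \<and> 2*i - 2 \<noteq> 2*b - 1"
proof (safe)
  fix a b assume ab: "(a, b) \<in> D"
  have "a \<noteq> i" "b \<noteq> j"
    using rook_placement_row_unique[OF D, of i] rook_placement_col_unique[OF D, of _ j] ab new by blast+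
  moreover have "1 \<le> b \<and> b < a" "1 \<le> j \<and> j < i"
    using rook_placement_pos[OF D, of a b] rook_placement_pos[OF D, of i j] ab by auto
  ultimately show "2*j - 1 = 2*a - 2 \<Longrightarrow> False" "2*j - 1 = 2*b - 1 \<Longrightarrow> False"
    "2*i - 2 = 2*a - 2 \<Longrightarrow> False" "2*i - 2 = 2*b - 1 \<Longrightarrow> False"
    by presburger+
qed

lemma sigmaD_insert:
  assumes D: "rook_placement n (insert (i, j) D)" and new: "(i, j) \<notin> D"
  shows "sigmaD (insert (i, j) D) = sigmaD D \<circ> transpose (2*j - 1) (2*i - 2)"
proof
  fix x
  have D0: "rook_placement n D" by (rule rook_placement_subset[OF D]) auto
  note fresh = sigmaD_free_new_rook[OF D new]
  have ij: "(i, j) \<in> insert (i, j) D" by simp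
  show "sigmaD (insert (i, j) D) x = (sigmaD D \<circ> transpose (2*j - 1) (2*i - 2)) x"
  proof (cases rule: sigmaD_cases[of D x])
    case (row a b)
    then have "transpose (2*j - 1) (2*i - 2) x = x"
      using bspec[OF fresh(1) row(1)] bspec[OF fresh(2) row(1)] by auto
    then show ?thesis using row sigmaD_row[OF D0 row(1)] sigmaD_row[OF D, of a b] by auto
  next
    case (col a b)
    then have "transpose (2*j - 1) (2*i - 2) x = x"
      using bspec[OF fresh(1) col(1)] bspec[OF fresh(2) col(1)] by auto
    then show ?thesis using col sigmaD_col[OF D0 col(1)] sigmaD_col[OF D, of a b] by auto
  next
    case free
    consider "x = 2*i - 2" | "x = 2*j - 1" | "x \<noteq> 2*i - 2" "x \<noteq> 2*j - 1" by blast
    then show ?thesis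
    proof cases
      case 1
      then show ?thesis using fresh sigmaD_row[OF D ij] by (auto simp: sigmaD_fixed)
    next
      case 2
      then show ?thesis using fresh sigmaD_col[OF D ij] by (auto simp: sigmaD_fixed)
    next
      case 3
      then show ?thesis using free by (auto simp: sigmaD_fixed)
    qed
  qed
qed

definition covering_count :: "(nat \<times> nat) set \<Rightarrow> nat \<Rightarrow> nat \<Rightarrow> nat" where
  "covering_count D p q =
     card {(a, b) \<in> D. 2*b - 1 \<le> p \<and> p < 2*a - 2 \<and> 2*b - 1 < q \<and> q \<le> 2*a - 2}"

lemma rank_count_sigmaD:
  assumes "rook_placement n D"
  shows "rank_count (sigmaD D) p q = rank_count id p q + covering_count D p q"
  using rook_placement_finite[OF assms] assms
proof (induction D rule: finite_induct)
  case empty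
  have "sigmaD {} = id" by (auto simp: sigmaD_def)
  then show ?case by (simp add: covering_count_def)
next
  case (insert e D)
  obtain i j where e: "e = (i, j)" by (cases e)
  have D: "rook_placement n (insert (i, j) D)" using insert.prems e by simp
  have new: "(i, j) \<notin> D" using insert.hyps e by simp
  have D0: "rook_placement n D" by (rule rook_placement_subset[OF D]) auto
  note fresh = sigmaD_free_new_rook[OF D new]
  have lo: "sigmaD D (2*j - 1) = 2*j - 1" by (rule sigmaD_fixed) (use fresh(1) in auto)
  have hi: "sigmaD D (2*i - 2) = 2*i - 2" by (rule sigmaD_fixed) (use fresh(2) in auto)
  have ij: "1 \<le> 2*j - 1" "2*j - 1 < 2*i - 2" using rook_placement_pos[OF D, of i j] by auto
  define C where "C = (\<lambda>a b. 2*b - 1 \<le> p \<and> p < 2*a - 2 \<and> 2*b - 1 < q \<and> q \<le> (2::nat)*a - 2)"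
  have "covering_count (insert (i, j) D) p q = covering_count D p q + (if C i j then 1 else 0)"
  proof (cases "C i j")
    case True
    have "finite {(a, b) \<in> D. C a b}" using insert.hyps(1) by (rule rev_finite_subset) auto
    moreover have "{(a, b) \<in> insert (i, j) D. C a b} = insert (i, j) {(a, b) \<in> D. C a b}"
      using True by auto
    ultimately show ?thesis using True new unfolding covering_count_def C_def by simp
  next
    case False
    then have "{(a, b) \<in> insert (i, j) D. C a b} = {(a, b) \<in> D. C a b}" by auto
    then show ?thesis using False unfolding covering_count_def C_def by simp
  qed
  moreover have "rank_count (sigmaD (insert (i, j) D)) p q =
                   rank_count (sigmaD D) p q + (if C i j then 1 else 0)"
    unfolding sigmaD_insert[OF D new] C_def
    using rank_count_comp_transpose[OF ij, of "sigmaD D" p q] lo hi ij by simp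
  ultimately show ?case using insert.IH[OF D0] e by simp
qed

definition corner_count :: "(nat \<times> nat) set \<Rightarrow> nat \<Rightarrow> nat \<Rightarrow> nat" where
  "corner_count D r c = card {(a, b) \<in> D. r \<le> a \<and> b \<le> c}"

lemma covering_count_eq_corner_count:
  assumes "1 \<le> q"
  shows "covering_count D p q =
           corner_count D ((max q (Suc p) + 3) div 2) ((min p (q - 1) + 1) div 2)"
proof -
  have col: "2*b - 1 \<le> m \<longleftrightarrow> b \<le> (m + 1) div 2" for b m :: nat
    by (auto simp: less_eq_div_iff_mult_less_eq)
  have row: "1 \<le> M \<Longrightarrow> M \<le> 2*a - 2 \<longleftrightarrow> (M + 3) div 2 \<le> a" for a M :: nat
    by (auto simp: not_less[symmetric] div_less_iff_less_mult)
  have "2*b - 1 \<le> p \<and> p < 2*a - 2 \<and> 2*b - 1 < q \<and> q \<le> 2*a - 2 \<longleftrightarrow>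
        2*b - 1 \<le> min p (q - 1) \<and> max q (Suc p) \<le> 2*a - 2" for a b :: nat
    using assms by auto
  then have "2*b - 1 \<le> p \<and> p < 2*a - 2 \<and> 2*b - 1 < q \<and> q \<le> 2*a - 2 \<longleftrightarrow>
        (max q (Suc p) + 3) div 2 \<le> a \<and> b \<le> (min p (q - 1) + 1) div 2" for a b :: nat
    using col row[of "max q (Suc p)"] by auto
  then show ?thesis unfolding covering_count_def corner_count_def by simp
qed

theorem bruhat_le_sigmaD_of_corner_count_le:
  assumes D: "rook_placement n D" and D': "rook_placement n D'"
    and dom: "\<And>r c. c < r \<Longrightarrow> corner_count D r c \<le> corner_count D' r c"
  shows "bruhat_le (2*n - 2) (sigmaD D) (sigmaD D')"
proof (rule bruhat_le_of_rank_count_le[OF sigmaD_permutes[OF D] sigmaD_permutes[OF D']])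
  fix p q
  have "covering_count D p q \<le> covering_count D' p q"
  proof (cases "q = 0")
    case False
    have "(min p (q - 1) + 1) div 2 < (max q (Suc p) + 3) div 2"
      by (auto simp: div_less_iff_less_mult not_less[symmetric] min_def max_def)
    then show ?thesis using False dom by (simp add: covering_count_eq_corner_count)
  qed (simp add: covering_count_def)
  then show "rank_count (sigmaD D) p q \<le> rank_count (sigmaD D') p q"
    using rank_count_sigmaD[OF D] rank_count_sigmaD[OF D'] by simp
qed

lemma polyfun_sum:
  "finite A \<Longrightarrow> (\<And>a. a \<in> A \<Longrightarrow> F a \<in> polyfun) \<Longrightarrow> (\<lambda>x. \<Sum>a\<in>A. F a x) \<in> polyfun"
proof (induction A rule: finite_induct)
  case empty
  then show ?case using polyfun.const[of 0] by simp
next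
  case (insert a A)
  then show ?case using polyfun.add[of "F a" "\<lambda>x. \<Sum>a\<in>A. F a x"] by simp
qed

lemma polyfun_prod:
  "finite A \<Longrightarrow> (\<And>a. a \<in> A \<Longrightarrow> F a \<in> polyfun) \<Longrightarrow> (\<lambda>x. \<Prod>a\<in>A. F a x) \<in> polyfun"
proof (induction A rule: finite_induct)
  case empty
  then show ?case using polyfun.const[of 1] by simp
next
  case (insert a A)
  then show ?case using polyfun.mult[of "F a" "\<lambda>x. \<Prod>a\<in>A. F a x"] by simp
qed

lemma polyfun_det:
  assumes "\<And>k l. F k l \<in> polyfun"
  shows "(\<lambda>x. det (mat s s (\<lambda>(k, l). F k l x))) \<in> polyfun"
proof -
  have "det (mat s s (\<lambda>(k, l). F k l x)) =
          (\<Sum>p\<in>{p. p permutes {0..<s}}. of_int (sign p) * (\<Prod>i\<in>{0..<s}. F i (p i) x))" for x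
    by (subst det_def'[of _ s]) (auto intro!: sum.cong prod.cong simp: permutes_in_image)
  moreover have "(\<lambda>x. \<Sum>p\<in>{p. p permutes {0..<s}}. of_int (sign p) * (\<Prod>i\<in>{0..<s}. F i (p i) x))
                   \<in> polyfun"
    using assms finite_permutations[of "{0..<s}"]
    by (intro polyfun_sum polyfun.mult[OF polyfun.const] polyfun_prod) auto
  ultimately show ?thesis by simp
qed

lemma det_zero_row:
  assumes "A \<in> carrier_mat s s" "k < s" "\<And>j. j < s \<Longrightarrow> A $$ (k, j) = 0"
  shows "det A = (0::'a::comm_ring_1)"
  unfolding det_def'[OF assms(1)]
proof (rule sum.neutral, intro ballI)
  fix p assume "p \<in> {p. p permutes {0..<s}}"
  then have "p k < s" using permutes_in_image assms(2) by fastforce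
  then have "(\<Prod>i = 0..<s. A $$ (i, p i)) = 0"
    using assms(2,3) by (intro prod_zero) (auto intro!: bexI[of _ k])
  then show "signof p * (\<Prod>i = 0..<s. A $$ (i, p i)) = 0" by simp
qed

lemma det_mat_sum_less_dim:
  fixes f g :: "nat \<Rightarrow> nat \<Rightarrow> 'a::comm_ring_1"
  assumes "r < s"
  shows "det (mat s s (\<lambda>(k, l). \<Sum>i<r. f k i * g i l)) = 0"
proof -
  define U where "U = mat s s (\<lambda>(k, i). if i < r then f k i else 0)"
  define V where "V = mat s s (\<lambda>(i, l). if i < r then g i l else 0)"
  have "mat s s (\<lambda>(k, l). \<Sum>i<r. f k i * g i l) = U * V"
  proof (rule eq_matI)
    fix k l assume "k < dim_row (U * V)" "l < dim_col (U * V)"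
    then have kl: "k < s" "l < s" by (auto simp: U_def V_def)
    have "(U * V) $$ (k, l) = (\<Sum>i<s. if i < r then f k i * g i l else 0)"
      using kl by (auto simp: U_def V_def scalar_prod_def atLeast0LessThan intro!: sum.cong)
    also have "\<dots> = (\<Sum>i<r. f k i * g i l)"
      by (rule sum.mono_neutral_cong_right) (use assms in auto)
    finally show "mat s s (\<lambda>(k, l). \<Sum>i<r. f k i * g i l) $$ (k, l) = (U * V) $$ (k, l)"
      using kl by simp
  qed (auto simp: U_def V_def)
  moreover have "det V = 0" by (rule det_zero_row[of V s r]) (use assms in \<open>auto simp: V_def\<close>)
  ultimately show ?thesis using det_mult[of U s V] by (simp add: U_def V_def)
qed

lemma is_inverse_minv: "b \<in> borel n \<Longrightarrow> is_inverse n b (minv n b)"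
  unfolding borel_def minv_def using someI_ex[of "is_inverse n b"] by blast

lemma borel_inverse_upper_triangular:
  assumes b: "b \<in> borel n" and inv: "is_inverse n b c" and "1 \<le> l" "l < y" "y \<le> n"
  shows "c y l = 0"
proof -
  have b_upper: "b k l = 0" if "1 \<le> l" "l < k" "k \<le> n" for k l
    using b that unfolding borel_def by blast
  have "\<forall>y. l < y \<and> y \<le> n \<longrightarrow> c y l = 0" if "1 \<le> l" "l \<le> n" for l
    using that
  proof (induction l rule: less_induct)
    case (less l)
    have col: "mmul n c b y l = c y l * b l l" if "l \<le> y" "y \<le> n" for y
    proof -
      have "c y k * b k l = (if k = l then c y l * b l l else 0)" if "k \<in> {1..n}" for k
      proof (cases k l rule: linorder_cases)
        case less
        then show ?thesis using less.IH[of k] \<open>l \<le> y\<close> \<open>y \<le> n\<close> that by auto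
      next
        case greater
        then show ?thesis using b_upper[of l k] less.prems that by auto
      qed simp
      then have "mmul n c b y l = (\<Sum>k\<in>{1..n}. if k = l then c y l * b l l else 0)"
        unfolding mmul_def by (intro sum.cong) auto
      also have "\<dots> = c y l * b l l" using less.prems by simp
      finally show ?thesis .
    qed
    have cb: "mmul n c b y l = (if y = l then 1 else 0)" if "y \<in> {1..n}" for y
      using inv less.prems that unfolding is_inverse_def by simp
    have "b l l \<noteq> 0" using col[of l] cb[of l] less.prems by auto
    show ?case
    proof (intro allI impI)
      fix y assume "l < y \<and> y \<le> n"
      then have "c y l * b l l = 0" using col[of y] cb[of y] less.prems by auto
      then show "c y l = 0" using \<open>b l l \<noteq> 0\<close> by simp
    qed
  qed
  then show ?thesis using assms by auto
qed

definition id_cmat :: cmat where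
  "id_cmat = (\<lambda>i j. if i = j then 1 else 0)"

lemma mmul_id_cmat_left: "mmul n id_cmat A i j = (if i \<in> {1..n} then A i j else 0)"
proof -
  have "(\<lambda>k. id_cmat i k * A k j) = (\<lambda>k. if k = i then A k j else 0)" by (auto simp: id_cmat_def)
  then show ?thesis unfolding mmul_def by (simp only: sum.delta finite_atLeastAtMost)
qed

lemma id_cmat_in_borel: "id_cmat \<in> borel n"
proof -
  have "is_inverse n id_cmat id_cmat"
    unfolding is_inverse_def mmul_id_cmat_left by (simp add: id_cmat_def)
  then show ?thesis unfolding borel_def by (auto simp: id_cmat_def)
qed

lemma fD_in_orbit:
  assumes "D \<subseteq> posroots n"
  shows "fD n D \<in> orbit n D"
proof -
  define c where "c = minv n id_cmat"
  have "mmul n id_cmat c k j = (if k = j then 1 else 0)" if "k \<in> {1..n}" "j \<in> {1..n}" for k j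
    using is_inverse_minv[OF id_cmat_in_borel] that unfolding is_inverse_def c_def by blast
  then have c_id: "c k j = (if k = j then 1 else 0)" if "k \<in> {1..n}" "j \<in> {1..n}" for k j
    using that by (simp add: mmul_id_cmat_left)
  have "bact n id_cmat (fD n D) i j = fD n D i j" for i j
  proof (cases "1 \<le> j \<and> j < i \<and> i \<le> n")
    case True
    have "mmul n (mmul n id_cmat (fD n D)) c i j = (\<Sum>k = 1..n. fD n D i k * c k j)"
      unfolding mmul_def[of n "mmul n id_cmat (fD n D)"] using True by (simp add: mmul_id_cmat_left)
    also have "\<dots> = (\<Sum>k = 1..n. if k = j then fD n D i k else 0)"
      using True c_id by (intro sum.cong) auto
    finally show ?thesis unfolding bact_def low_def c_def using True by simp
  next
    case False
    then show ?thesis using assms unfolding bact_def low_def fD_def posroots_def by auto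
  qed
  then show ?thesis unfolding orbit_def using id_cmat_in_borel by (auto intro!: image_eqI ext)
qed

lemma bact_fD_entry:
  assumes D: "D \<subseteq> posroots n" and "1 \<le> l" "l < a" "a \<le> n"
  shows "bact n b (fD n D) a l = (\<Sum>(t, k)\<in>D. b a t * minv n b k l)"
proof -
  define c where "c = minv n b"
  have "bact n b (fD n D) a l = (\<Sum>k\<in>{1..n}. \<Sum>t\<in>{1..n}. b a t * fD n D t k * c k l)"
    unfolding bact_def low_def mmul_def c_def using assms by (simp add: sum_distrib_right)
  also have "\<dots> = (\<Sum>(t, k)\<in>{1..n} \<times> {1..n}. b a t * fD n D t k * c k l)"
    by (subst sum.swap) (rule sum.cartesian_product)
  also have "\<dots> = (\<Sum>(t, k)\<in>D. b a t * c k l)"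
    using D by (intro sum.mono_neutral_cong_right) (auto simp: fD_def posroots_def)
  finally show ?thesis unfolding c_def .
qed

lemma bact_fD_corner_entry:
  assumes D: "rook_placement n D" and b: "b \<in> borel n"
    and "r \<le> a" "a \<le> n" "1 \<le> l" "l \<le> c" "c < r"
  shows "bact n b (fD n D) a l = (\<Sum>(t, k)\<in>{(t, k) \<in> D. r \<le> t \<and> k \<le> c}. b a t * minv n b k l)"
proof -
  \<comment> \<open>Rooks outside the corner are killed by the triangularity of \<open>b\<close> or of its inverse.\<close>
  have vanish: "b a t * minv n b k l = 0" if tk: "(t, k) \<in> D" and out: "\<not> (r \<le> t \<and> k \<le> c)" for t k
  proof (cases "t < r")
    case True
    then have "b a t = 0" using b rook_placement_pos[OF D tk] assms unfolding borel_def by auto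
    then show ?thesis by simp
  next
    case False
    then have "minv n b k l = 0"
      using borel_inverse_upper_triangular[OF b is_inverse_minv[OF b]] rook_placement_pos[OF D tk]
        out assms by auto
    then show ?thesis by simp
  qed
  have "bact n b (fD n D) a l = (\<Sum>(t, k)\<in>D. b a t * minv n b k l)"
    using D assms unfolding rook_placement_def by (intro bact_fD_entry) auto
  also have "\<dots> = (\<Sum>(t, k)\<in>{(t, k) \<in> D. r \<le> t \<and> k \<le> c}. b a t * minv n b k l)"
    by (rule sum.mono_neutral_right[OF rook_placement_finite[OF D]])
      (auto simp del: mult_eq_0_iff intro: vanish)
  finally show ?thesis .
qed

lemma det_corner_minor_orbit:
  assumes D: "rook_placement n D" and x: "x \<in> orbit n D" and "c < r"
    and rows: "\<And>k. k < s \<Longrightarrow> r \<le> ar k \<and> ar k \<le> n"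
    and cols: "\<And>l. l < s \<Longrightarrow> 1 \<le> bc l \<and> bc l \<le> c"
    and small: "corner_count D r c < s"
  shows "det (mat s s (\<lambda>(k, l). x (ar k) (bc l))) = 0"
proof -
  obtain b where b: "b \<in> borel n" and xb: "x = bact n b (fD n D)" using x unfolding orbit_def by auto
  define E where "E = {(t, k) \<in> D. r \<le> t \<and> k \<le> c}"
  have "finite E" unfolding E_def using rook_placement_finite[OF D] by (rule rev_finite_subset) auto
  then obtain e where e: "bij_betw e {0..<card E} E" using ex_bij_betw_nat_finite by blast
  have "x (ar k) (bc l) = (\<Sum>i<card E. b (ar k) (fst (e i)) * minv n b (snd (e i)) (bc l))"
    if "k < s" "l < s" for k l
  proof -
    have "x (ar k) (bc l) = (\<Sum>(t, k')\<in>E. b (ar k) t * minv n b k' (bc l))"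
      unfolding xb E_def using rows[OF that(1)] cols[OF that(2)] \<open>c < r\<close>
      by (intro bact_fD_corner_entry[OF D b]) auto
    also have "\<dots> = (\<Sum>i<card E. b (ar k) (fst (e i)) * minv n b (snd (e i)) (bc l))"
      using sum.reindex_bij_betw[OF e, of "\<lambda>(t, k'). b (ar k) t * minv n b k' (bc l)"]
      by (simp add: case_prod_unfold atLeast0LessThan)
    finally show ?thesis .
  qed
  then have "mat s s (\<lambda>(k, l). x (ar k) (bc l)) =
      mat s s (\<lambda>(k, l). \<Sum>i<card E. b (ar k) (fst (e i)) * minv n b (snd (e i)) (bc l))"
    by (intro eq_matI) auto
  also have "det \<dots> = 0"
    using small unfolding corner_count_def E_def by (intro det_mat_sum_less_dim) simp
  finally show ?thesis .
qed

lemma mat_fD_rook_enumeration: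
  assumes D: "rook_placement n D" and g: "bij_betw g {0..<s} S" and "S \<subseteq> D"
  shows "mat s s (\<lambda>(k, l). fD n D (fst (g k)) (snd (g l))) = 1\<^sub>m s"
proof (rule eq_matI)
  fix k l assume "k < dim_row (1\<^sub>m s :: complex mat)" "l < dim_col (1\<^sub>m s :: complex mat)"
  then have kl: "k < s" "l < s" by auto
  then have gD: "g k \<in> D" "g l \<in> D" using g \<open>S \<subseteq> D\<close> unfolding bij_betw_def by auto
  have "(fst (g k), snd (g l)) \<in> D \<longleftrightarrow> k = l"
  proof
    assume "(fst (g k), snd (g l)) \<in> D"
    then have "snd (g k) = snd (g l)" "fst (g k) = fst (g l)"
      using gD rook_placement_row_unique[OF D] rook_placement_col_unique[OF D]
      by (metis prod.collapse)+
    then show "k = l" using g kl unfolding bij_betw_def inj_on_def by (auto simp: prod_eq_iff)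
  qed (use gD in simp)
  then show "mat s s (\<lambda>(k, l). fD n D (fst (g k)) (snd (g l))) $$ (k, l) = 1\<^sub>m s $$ (k, l)"
    using kl by (simp add: fD_def)
qed auto

theorem corner_count_le_of_orbit_closure:
  assumes D: "rook_placement n D" and D': "rook_placement n D'"
    and closure: "orbit n D \<subseteq> zariski_closure (orbit n D')" and "c < r"
  shows "corner_count D r c \<le> corner_count D' r c"
proof (rule ccontr)
  define s where "s = Suc (corner_count D' r c)"
  assume "\<not> corner_count D r c \<le> corner_count D' r c"
  then have "s \<le> card {(t, k) \<in> D. r \<le> t \<and> k \<le> c}" unfolding s_def corner_count_def by simp
  then obtain S where S: "S \<subseteq> {(t, k) \<in> D. r \<le> t \<and> k \<le> c}" "card S = s" "finite S"
    by (rule obtain_subset_with_card_n)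
  then obtain g where g: "bij_betw g {0..<s} S" using ex_bij_betw_nat_finite by blast
  have gS: "g k \<in> S" if "k < s" for k using g that unfolding bij_betw_def by auto
  define minor where "minor = (\<lambda>x::cmat. det (mat s s (\<lambda>(k, l). x (fst (g k)) (snd (g l)))))"
  have "minor \<in> polyfun" unfolding minor_def by (rule polyfun_det) (rule polyfun.coord)
  moreover have "minor x = 0" if "x \<in> orbit n D'" for x
    unfolding minor_def
  proof (rule det_corner_minor_orbit[OF D' that \<open>c < r\<close>])
    show "r \<le> fst (g k) \<and> fst (g k) \<le> n" "1 \<le> snd (g k) \<and> snd (g k) \<le> c" if "k < s" for k
      using gS[OF that] S(1) rook_placement_pos[OF D] by fastforce+
  qed (simp add: s_def)
  moreover have "fD n D \<in> zariski_closure (orbit n D')"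
    using closure fD_in_orbit D unfolding rook_placement_def by blast
  ultimately have "minor (fD n D) = 0" unfolding zariski_closure_def by blast
  moreover have "minor (fD n D) = 1"
    using S(1) unfolding minor_def by (subst mat_fD_rook_enumeration[OF D g]) auto
  ultimately show False by simp
qed

theorem corollary1p8:
  fixes n :: nat and D D' :: "(nat \<times> nat) set"
  assumes "n \<ge> 2"
    and "rook_placement n D" and "rook_placement n D'"
    and "orbit n D \<subseteq> zariski_closure (orbit n D')"
  shows "bruhat_le (2*n - 2) (sigmaD D) (sigmaD D')"
  using bruhat_le_sigmaD_of_corner_count_le[OF assms(2,3)
      corner_count_le_of_orbit_closure[OF assms(2-4)]] .

end
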